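(* Let $F(x)$ be a formula in prenex form with no free variables other than $x$, and let $\mathbf c$ be a nonempty finite set of object constants containing every object constant occurring in $F(x)$. (a) If the sentence $\forall xF(x)$ is safe, then $\forall xF(x)\leftrightarrow\bigwedge_{c\in\mathbf c}F(c)$ is derivable from $\mathit{SPP}_{\mathbf c}$ in $\mathbf{INT}^=+\mathrm{DE}$. (b) If the sentence $\exists xF(x)$ is safe, then $\exists xF(x)\leftrightarrow\bigvee_{c\in\mathbf c}F(c)$ is derivable from $\mathit{SPP}_{\mathbf c}$ in $\mathbf{INT}^=+\mathrm{DE}$.
   Context: Formulas are first-order formulas with object constants, predicate constants and equality, but no function constants of arity $>0$; primitive connectives $\bot,\land,\lor,\rightarrow$, quantifiers $\forall,\exists$; $\neg G$ is $G\rightarrow\bot$, $\top$ is $\bot\rightarrow\bot$, $G\leftrightarrow H$ is $(G\rightarrow H)\land(H\rightarrow G)$. Restricted variables: for quantifier-free $G$, $\mathrm{RV}(G)$ is: $\emptyset$ if $G$ is an equality between two variables; the set of variables of $G$ if $G$ is any other atomic formula; $\mathrm{RV}(\bot)=\emptyset$; $\mathrm{RV}(G\land H)=\mathrm{RV}(G)\cup\mathrm{RV}(H)$; $\mathrm{RV}(G\lor H)=\mathrm{RV}(G)\cap\mathrm{RV}(H)$; $\mathrm{RV}(G\rightarrow H)=\emptyset$. An occurrence of a subformula or variable is positive if the number of implications containing it in their antecedent is even, negative otherwise, and strictly positive if it is in the antecedent of no implication. A prenex sentence $Q_1x_1\cdots Q_nx_nM$ ($M$ quantifier-free, $x_i$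 distinct) is semi-safe if every strictly positive occurrence of every $x_i$ in $M$ belongs to a subformula $G\rightarrow H$ with $x_i\in\mathrm{RV}(G)$. Simplification transformations: $\neg\bot\mapsto\top$, $\neg\top\mapsto\bot$; $\bot\land G\mapsto\bot$, $G\land\bot\mapsto\bot$, $\top\land G\mapsto G$, $G\land\top\mapsto G$; $\bot\lor G\mapsto G$, $G\lor\bot\mapsto G$, $\top\lor G\mapsto\top$, $G\lor\top\mapsto\top$; $\bot\rightarrow G\mapsto\top$, $G\rightarrow\top\mapsto\top$, $\top\rightarrow G\mapsto G$. A variable $x$ is positively (resp. negatively) weakly restricted in a quantifier-free formula $G$ if the formula obtained from $G$ by first replacing every atomic formula $A$ of $G$ with $x\in\mathrm{RV}(A)$ by $\bot$ and then applying the simplification transformations is $\top$ (resp. $\bot$). A semi-safe prenex sentence $Q_1x_1\cdots Q_nx_nM$ is safe if for every occurrence of every variable $x_i$: (a) if $Q_i=\forall$, the occurrence belongs to a positive subformula (of the sentence) in which $x_i$ is positively weakly restricted, or to a negative subformula in which $x_i$ is negatively weakly restricted; (b) if $Q_i=\exists$, the occurrence belongs to a negative subformula in which $x_i$ is positively weakly restricted, or to a positive subformula in which $x_i$ is negatively weakly restricted. For a finite set $\mathbf c$ of object constants, $\mathit{in}_{\mathbf c}(x_1,\dots,x_m)$ is $\bigwedge_{1\le j\le m}\bigvee_{c\in\mathbf c}x_j=c$, and $\mathit{SPP}_{\mathbf c}$ is the conjunction of $\forall\mathbf x(p_i(\mathbf x)\rightarrow\mathit{in}_{\mathbf c}(\mathbf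 x))$ over all predicate constants $p_i$ occurring in $F(x)$. $\mathbf{INT}^=$ is intuitionistic predicate logic with equality; $\mathrm{DE}$ is the decidable equality axiom $x=y\lor x\neq y$. *)

theory Defs
  imports Main
begin

text \<open>Variables are de Bruijn indices: inside a quantifier, index 0 is the bound variable.\<close>

datatype 'c trm = Var nat | Cst 'c

datatype ('c, 'p) fm =
    Bot
  | Eq "'c trm" "'c trm"
  | Pred 'p "'c trm list"
  | And "('c, 'p) fm" "('c, 'p) fm"
  | Or "('c, 'p) fm" "('c, 'p) fm"
  | Imp "('c, 'p) fm" "('c, 'p) fm"
  | All "('c, 'p) fm"
  | Ex "('c, 'p) fm"

definition Neg :: "('c, 'p) fm \<Rightarrow> ('c, 'p) fm" where
  "Neg G = Imp G Bot"

definition Top :: "('c, 'p) fm" where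
  "Top = Imp Bot Bot"

definition Iff :: "('c, 'p) fm \<Rightarrow> ('c, 'p) fm \<Rightarrow> ('c, 'p) fm" where
  "Iff G H = And (Imp G H) (Imp H G)"

fun conj_list :: "('c, 'p) fm list \<Rightarrow> ('c, 'p) fm" where
  "conj_list [] = Top"
| "conj_list [A] = A"
| "conj_list (A # As) = And A (conj_list As)"

fun disj_list :: "('c, 'p) fm list \<Rightarrow> ('c, 'p) fm" where
  "disj_list [] = Bot"
| "disj_list [A] = A"
| "disj_list (A # As) = Or A (disj_list As)"

fun vars_trm :: "'c trm \<Rightarrow> nat set" where
  "vars_trm (Var i) = {i}"
| "vars_trm (Cst c) = {}"

fun consts_trm :: "'c trm \<Rightarrow> 'c set" where
  "consts_trm (Var i) = {}"
| "consts_trm (Cst c) = {c}"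

fun fv :: "('c, 'p) fm \<Rightarrow> nat set" where
  "fv Bot = {}"
| "fv (Eq s t) = vars_trm s \<union> vars_trm t"
| "fv (Pred p ts) = (\<Union>t\<in>set ts. vars_trm t)"
| "fv (And A B) = fv A \<union> fv B"
| "fv (Or A B) = fv A \<union> fv B"
| "fv (Imp A B) = fv A \<union> fv B"
| "fv (All A) = (\<lambda>i. i - 1) ` (fv A - {0})"
| "fv (Ex A) = (\<lambda>i. i - 1) ` (fv A - {0})"

fun consts_fm :: "('c, 'p) fm \<Rightarrow> 'c set" where
  "consts_fm Bot = {}"
| "consts_fm (Eq s t) = consts_trm s \<union> consts_trm t"
| "consts_fm (Pred p ts) = (\<Union>t\<in>set ts. consts_trm t)"
| "consts_fm (And A B) = consts_fm A \<union> consts_fm B"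
| "consts_fm (Or A B) = consts_fm A \<union> consts_fm B"
| "consts_fm (Imp A B) = consts_fm A \<union> consts_fm B"
| "consts_fm (All A) = consts_fm A"
| "consts_fm (Ex A) = consts_fm A"

text \<open>Predicate constants occurring in a formula, paired with the arity of the
occurrence (a predicate constant is identified with its arity).\<close>
fun preds_fm :: "('c, 'p) fm \<Rightarrow> ('p \<times> nat) set" where
  "preds_fm Bot = {}"
| "preds_fm (Eq s t) = {}"
| "preds_fm (Pred p ts) = {(p, length ts)}"
| "preds_fm (And A B) = preds_fm A \<union> preds_fm B"
| "preds_fm (Or A B) = preds_fm A \<union> preds_fm B"
| "preds_fm (Imp A B) = preds_fm A \<union> preds_fm B"
| "preds_fm (All A) = preds_fm A"
| "preds_fm (Ex A) = preds_fm A"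

fun lift_trm :: "nat \<Rightarrow> 'c trm \<Rightarrow> 'c trm" where
  "lift_trm k (Var i) = (if i < k then Var i else Var (Suc i))"
| "lift_trm k (Cst c) = Cst c"

fun lift_fm :: "nat \<Rightarrow> ('c, 'p) fm \<Rightarrow> ('c, 'p) fm" where
  "lift_fm k Bot = Bot"
| "lift_fm k (Eq s t) = Eq (lift_trm k s) (lift_trm k t)"
| "lift_fm k (Pred p ts) = Pred p (map (lift_trm k) ts)"
| "lift_fm k (And A B) = And (lift_fm k A) (lift_fm k B)"
| "lift_fm k (Or A B) = Or (lift_fm k A) (lift_fm k B)"
| "lift_fm k (Imp A B) = Imp (lift_fm k A) (lift_fm k B)"
| "lift_fm k (All A) = All (lift_fm (Suc k) A)"
| "lift_fm k (Ex A) = Ex (lift_fm (Suc k) A)"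

fun subst_trm :: "'c trm \<Rightarrow> nat \<Rightarrow> 'c trm \<Rightarrow> 'c trm" where
  "subst_trm t k (Var i) = (if i < k then Var i else if i = k then t else Var (i - 1))"
| "subst_trm t k (Cst c) = Cst c"

fun subst_fm :: "'c trm \<Rightarrow> nat \<Rightarrow> ('c, 'p) fm \<Rightarrow> ('c, 'p) fm" where
  "subst_fm t k Bot = Bot"
| "subst_fm t k (Eq u v) = Eq (subst_trm t k u) (subst_trm t k v)"
| "subst_fm t k (Pred p ts) = Pred p (map (subst_trm t k) ts)"
| "subst_fm t k (And A B) = And (subst_fm t k A) (subst_fm t k B)"
| "subst_fm t k (Or A B) = Or (subst_fm t k A) (subst_fm t k B)"
| "subst_fm t k (Imp A B) = Imp (subst_fm t k A) (subst_fm t k B)"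
| "subst_fm t k (All A) = All (subst_fm (lift_trm 0 t) (Suc k) A)"
| "subst_fm t k (Ex A) = Ex (subst_fm (lift_trm 0 t) (Suc k) A)"

text \<open>Instantiating the outermost free variable x (index 0) of F(x) by a term.\<close>
abbreviation inst :: "('c, 'p) fm \<Rightarrow> 'c trm \<Rightarrow> ('c, 'p) fm" where
  "inst A t \<equiv> subst_fm t 0 A"

section \<open>Intuitionistic predicate logic with equality, plus DE (natural deduction)\<close>

inductive deriv_DE :: "('c, 'p) fm list \<Rightarrow> ('c, 'p) fm \<Rightarrow> bool" (infix "\<turnstile>\<^sub>D\<^sub>E" 50) where
  Assm:  "A \<in> set \<Gamma> \<Longrightarrow> \<Gamma> \<turnstile>\<^sub>D\<^sub>E A"
| BotE:  "\<Gamma> \<turnstile>\<^sub>D\<^sub>E Bot \<Longrightarrow> \<Gamma> \<turnstile>\<^sub>D\<^sub>E A"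
| AndI:  "\<Gamma> \<turnstile>\<^sub>D\<^sub>E A \<Longrightarrow> \<Gamma> \<turnstile>\<^sub>D\<^sub>E B \<Longrightarrow> \<Gamma> \<turnstile>\<^sub>D\<^sub>E And A B"
| AndE1: "\<Gamma> \<turnstile>\<^sub>D\<^sub>E And A B \<Longrightarrow> \<Gamma> \<turnstile>\<^sub>D\<^sub>E A"
| AndE2: "\<Gamma> \<turnstile>\<^sub>D\<^sub>E And A B \<Longrightarrow> \<Gamma> \<turnstile>\<^sub>D\<^sub>E B"
| OrI1:  "\<Gamma> \<turnstile>\<^sub>D\<^sub>E A \<Longrightarrow> \<Gamma> \<turnstile>\<^sub>D\<^sub>E Or A B"
| OrI2:  "\<Gamma> \<turnstile>\<^sub>D\<^sub>E B \<Longrightarrow> \<Gamma> \<turnstile>\<^sub>D\<^sub>E Or A B"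
| OrE:   "\<Gamma> \<turnstile>\<^sub>D\<^sub>E Or A B \<Longrightarrow> (A # \<Gamma>) \<turnstile>\<^sub>D\<^sub>E C \<Longrightarrow> (B # \<Gamma>) \<turnstile>\<^sub>D\<^sub>E C \<Longrightarrow> \<Gamma> \<turnstile>\<^sub>D\<^sub>E C"
| ImpI:  "(A # \<Gamma>) \<turnstile>\<^sub>D\<^sub>E B \<Longrightarrow> \<Gamma> \<turnstile>\<^sub>D\<^sub>E Imp A B"
| ImpE:  "\<Gamma> \<turnstile>\<^sub>D\<^sub>E Imp A B \<Longrightarrow> \<Gamma> \<turnstile>\<^sub>D\<^sub>E A \<Longrightarrow> \<Gamma> \<turnstile>\<^sub>D\<^sub>E B"
| AllI:  "map (lift_fm 0) \<Gamma> \<turnstile>\<^sub>D\<^sub>E A \<Longrightarrow> \<Gamma> \<turnstile>\<^sub>D\<^sub>E All A"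
| AllE:  "\<Gamma> \<turnstile>\<^sub>D\<^sub>E All A \<Longrightarrow> \<Gamma> \<turnstile>\<^sub>D\<^sub>E inst A t"
| ExI:   "\<Gamma> \<turnstile>\<^sub>D\<^sub>E inst A t \<Longrightarrow> \<Gamma> \<turnstile>\<^sub>D\<^sub>E Ex A"
| ExE:   "\<Gamma> \<turnstile>\<^sub>D\<^sub>E Ex A \<Longrightarrow> (A # map (lift_fm 0) \<Gamma>) \<turnstile>\<^sub>D\<^sub>E lift_fm 0 B \<Longrightarrow> \<Gamma> \<turnstile>\<^sub>D\<^sub>E B"
| Refl:  "\<Gamma> \<turnstile>\<^sub>D\<^sub>E Eq t t"
| EqSubst: "\<Gamma> \<turnstile>\<^sub>D\<^sub>E Eq s t \<Longrightarrow> \<Gamma> \<turnstile>\<^sub>D\<^sub>E inst A s \<Longrightarrow> \<Gamma> \<turnstile>\<^sub>D\<^sub>E inst A t"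
| DE:    "\<Gamma> \<turnstile>\<^sub>D\<^sub>E Or (Eq s t) (Neg (Eq s t))"

fun qfree :: "('c, 'p) fm \<Rightarrow> bool" where
  "qfree (All A) = False"
| "qfree (Ex A) = False"
| "qfree (And A B) = (qfree A \<and> qfree B)"
| "qfree (Or A B) = (qfree A \<and> qfree B)"
| "qfree (Imp A B) = (qfree A \<and> qfree B)"
| "qfree _ = True"

text \<open>Quantifier prefix (True = forall, False = exists; outermost first) and matrix.
In the matrix of Q1 x1 ... Qn xn M, variable x_i is de Bruijn index n - i.\<close>
fun strip :: "('c, 'p) fm \<Rightarrow> bool list \<times> ('c, 'p) fm" where
  "strip (All A) = (let (qs, M) = strip A in (True # qs, M))"
| "strip (Ex A) = (let (qs, M) = strip A in (False # qs, M))"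
| "strip A = ([], A)"

definition prenex :: "('c, 'p) fm \<Rightarrow> bool" where
  "prenex F = qfree (snd (strip F))"

definition sentence :: "('c, 'p) fm \<Rightarrow> bool" where
  "sentence F = (fv F = {})"

fun RV_atom_trm :: "'c trm \<Rightarrow> 'c trm \<Rightarrow> nat set" where
  "RV_atom_trm (Var i) (Var j) = {}"
| "RV_atom_trm s t = vars_trm s \<union> vars_trm t"

fun RV :: "('c, 'p) fm \<Rightarrow> nat set" where
  "RV Bot = {}"
| "RV (Eq s t) = RV_atom_trm s t"
| "RV (Pred p ts) = (\<Union>t\<in>set ts. vars_trm t)"
| "RV (And G H) = RV G \<union> RV H"
| "RV (Or G H) = RV G \<inter> RV H"
| "RV (Imp G H) = {}"
| "RV (All A) = {}"
| "RV (Ex A) = {}"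

text \<open>semi_safe_var x M: every strictly positive occurrence of x in the
quantifier-free M belongs to a subformula G \<longrightarrow> H with x \<in> RV G.\<close>
fun semi_safe_var :: "nat \<Rightarrow> ('c, 'p) fm \<Rightarrow> bool" where
  "semi_safe_var x Bot = True"
| "semi_safe_var x (Eq s t) = (x \<notin> vars_trm s \<union> vars_trm t)"
| "semi_safe_var x (Pred p ts) = (x \<notin> (\<Union>t\<in>set ts. vars_trm t))"
| "semi_safe_var x (And G H) = (semi_safe_var x G \<and> semi_safe_var x H)"
| "semi_safe_var x (Or G H) = (semi_safe_var x G \<and> semi_safe_var x H)"
| "semi_safe_var x (Imp G H) = (x \<in> RV G \<or> semi_safe_var x H)"
| "semi_safe_var x (All A) = False"
| "semi_safe_var x (Ex A) = False"

definition semi_safe :: "('c, 'p) fm \<Rightarrow> bool" where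
  "semi_safe S = (prenex S \<and> sentence S \<and>
     (let (qs, M) = strip S; n = length qs in \<forall>i<n. semi_safe_var (n - 1 - i) M))"

definition mk_and :: "('c, 'p) fm \<Rightarrow> ('c, 'p) fm \<Rightarrow> ('c, 'p) fm" where
  "mk_and G H = (if G = Bot \<or> H = Bot then Bot else if G = Top then H
                 else if H = Top then G else And G H)"

definition mk_or :: "('c, 'p) fm \<Rightarrow> ('c, 'p) fm \<Rightarrow> ('c, 'p) fm" where
  "mk_or G H = (if G = Bot then H else if H = Bot then G
                else if G = Top \<or> H = Top then Top else Or G H)"

definition mk_imp :: "('c, 'p) fm \<Rightarrow> ('c, 'p) fm \<Rightarrow> ('c, 'p) fm" where
  "mk_imp G H = (if G = Bot \<or> H = Top then Top else if G = Top then H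
                 else Imp G H)"

fun simplify :: "('c, 'p) fm \<Rightarrow> ('c, 'p) fm" where
  "simplify (And G H) = mk_and (simplify G) (simplify H)"
| "simplify (Or G H) = mk_or (simplify G) (simplify H)"
| "simplify (Imp G H) = mk_imp (simplify G) (simplify H)"
| "simplify G = G"

fun erase :: "nat \<Rightarrow> ('c, 'p) fm \<Rightarrow> ('c, 'p) fm" where
  "erase x Bot = Bot"
| "erase x (Eq s t) = (if x \<in> RV_atom_trm s t then Bot else Eq s t)"
| "erase x (Pred p ts) = (if x \<in> (\<Union>t\<in>set ts. vars_trm t) then Bot else Pred p ts)"
| "erase x (And G H) = And (erase x G) (erase x H)"
| "erase x (Or G H) = Or (erase x G) (erase x H)"
| "erase x (Imp G H) = Imp (erase x G) (erase x H)"
| "erase x (All A) = All A"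
| "erase x (Ex A) = Ex A"

definition pos_weakly_restricted :: "nat \<Rightarrow> ('c, 'p) fm \<Rightarrow> bool" where
  "pos_weakly_restricted x G = (simplify (erase x G) = Top)"

definition neg_weakly_restricted :: "nat \<Rightarrow> ('c, 'p) fm \<Rightarrow> bool" where
  "neg_weakly_restricted x G = (simplify (erase x G) = Bot)"

text \<open>safe_var q x pol G: every occurrence of x in G lies in a subformula S of G
(including G itself) satisfying the safety condition for quantifier q
(True = forall, False = exists), where pol is the polarity of S
(True = positive) in the whole sentence; pol is the polarity of G.\<close>
definition safe_cond :: "bool \<Rightarrow> nat \<Rightarrow> bool \<Rightarrow> ('c, 'p) fm \<Rightarrow> bool" where
  "safe_cond q x pol G =
     (if q then (pol \<and> pos_weakly_restricted x G) \<or> (\<not> pol \<and> neg_weakly_restricted x G)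
      else (\<not> pol \<and> pos_weakly_restricted x G) \<or> (pol \<and> neg_weakly_restricted x G))"

fun safe_var :: "bool \<Rightarrow> nat \<Rightarrow> bool \<Rightarrow> ('c, 'p) fm \<Rightarrow> bool" where
  "safe_var q x pol Bot = True"
| "safe_var q x pol (Eq s t) = (safe_cond q x pol (Eq s t :: ('c, 'p) fm) \<or> x \<notin> vars_trm s \<union> vars_trm t)"
| "safe_var q x pol (Pred p ts) =
     (safe_cond q x pol (Pred p ts) \<or> x \<notin> (\<Union>t\<in>set ts. vars_trm t))"
| "safe_var q x pol (And G H) =
     (safe_cond q x pol (And G H) \<or> (safe_var q x pol G \<and> safe_var q x pol H))"
| "safe_var q x pol (Or G H) =
     (safe_cond q x pol (Or G H) \<or> (safe_var q x pol G \<and> safe_var q x pol H))"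
| "safe_var q x pol (Imp G H) =
     (safe_cond q x pol (Imp G H) \<or> (safe_var q x (\<not> pol) G \<and> safe_var q x pol H))"
| "safe_var q x pol (All A) = False"
| "safe_var q x pol (Ex A) = False"

definition safe :: "('c, 'p) fm \<Rightarrow> bool" where
  "safe S = (semi_safe S \<and>
     (let (qs, M) = strip S; n = length qs in \<forall>i<n. safe_var (qs ! i) (n - 1 - i) True M))"

text \<open>in_c(x_1,...,x_m) with x_j the de Bruijn index m - j (under m universal binders).\<close>
definition in_c :: "'c list \<Rightarrow> nat \<Rightarrow> ('c, 'p) fm" where
  "in_c cs m = conj_list (map (\<lambda>j. disj_list (map (\<lambda>c. Eq (Var (m - 1 - j)) (Cst c)) cs)) [0..<m])"

definition spp_axiom :: "'c list \<Rightarrow> 'p \<times> nat \<Rightarrow> ('c, 'p) fm" where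
  "spp_axiom cs pm = (case pm of (p, m) \<Rightarrow>
     ((\<lambda>A. All A) ^^ m) (Imp (Pred p (map (\<lambda>j. Var (m - 1 - j)) [0..<m])) (in_c cs m)))"

definition SPP :: "'c list \<Rightarrow> ('p \<times> nat) list \<Rightarrow> ('c, 'p) fm" where
  "SPP cs ps = conj_list (map (spp_axiom cs) ps)"

end

theory Submission
  imports Defs
begin

text \<open>By decidable equality, either x equals some constant c of cs, and then F(x) and F(c)
  are interchangeable by substitution, or x differs from every constant of cs.  In the latter
  case SPP refutes every atomic formula A with x \<in> RV(A), so a subformula in which x is
  positively (negatively) weakly restricted is provably true (false).  Safety puts every
  occurrence of x inside such a subformula of the appropriate polarity, so monotonicity of
  the connectives and of the quantifier prefix yields F(c) \<longrightarrow> F(x) if x is universally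
  quantified and F(x) \<longrightarrow> F(c) if it is existentially quantified, for any constant c.
  Hence \<forall>x F(x) follows from the conjunction of the instances F(c), and \<exists>x F(x) implies
  their disjunction; the converse implications are immediate.\<close>

section \<open>Derived rules\<close>

lemma deriv_DE_weaken: "\<Gamma> \<turnstile>\<^sub>D\<^sub>E A \<Longrightarrow> set \<Gamma> \<subseteq> set \<Delta> \<Longrightarrow> \<Delta> \<turnstile>\<^sub>D\<^sub>E A"
proof (induction arbitrary: \<Delta> rule: deriv_DE.induct)
  case (OrE \<Gamma> A B C)
  show ?case
    by (rule deriv_DE.OrE[OF OrE.IH(1)[OF OrE.prems] OrE.IH(2,3)]) (use OrE.prems in auto)
next
  case (ImpI A \<Gamma> B)
  show ?case by (rule deriv_DE.ImpI[OF ImpI.IH]) (use ImpI.prems in auto)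
next
  case (AllI \<Gamma> A)
  show ?case by (rule deriv_DE.AllI[OF AllI.IH]) (use AllI.prems in auto)
next
  case (ExE \<Gamma> A B)
  show ?case by (rule deriv_DE.ExE[OF ExE.IH(1)[OF ExE.prems] ExE.IH(2)]) (use ExE.prems in auto)
next
  case (EqSubst \<Gamma> s t A)
  then show ?case by (meson deriv_DE.EqSubst)
qed (auto intro: deriv_DE.intros)

lemma deriv_DE_Cons: "\<Gamma> \<turnstile>\<^sub>D\<^sub>E A \<Longrightarrow> (B # \<Gamma>) \<turnstile>\<^sub>D\<^sub>E A"
  by (erule deriv_DE_weaken) auto

lemma deriv_DE_hd: "(A # \<Gamma>) \<turnstile>\<^sub>D\<^sub>E A"
  by (rule Assm) simp

lemma Top_I: "\<Gamma> \<turnstile>\<^sub>D\<^sub>E Top"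
  unfolding Top_def by (rule ImpI, rule deriv_DE_hd)

lemma Imp_refl: "\<Gamma> \<turnstile>\<^sub>D\<^sub>E Imp A A"
  by (rule ImpI, rule deriv_DE_hd)

lemma Imp_const: "\<Gamma> \<turnstile>\<^sub>D\<^sub>E B \<Longrightarrow> \<Gamma> \<turnstile>\<^sub>D\<^sub>E Imp A B"
  by (rule ImpI, erule deriv_DE_Cons)

lemma Imp_trans: "\<Gamma> \<turnstile>\<^sub>D\<^sub>E Imp A B \<Longrightarrow> \<Gamma> \<turnstile>\<^sub>D\<^sub>E Imp B C \<Longrightarrow> \<Gamma> \<turnstile>\<^sub>D\<^sub>E Imp A C"
  by (rule ImpI, rule ImpE[of _ B], erule deriv_DE_Cons)
    (rule ImpE[of _ A], erule deriv_DE_Cons, rule deriv_DE_hd)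

lemma Bot_Imp: "\<Gamma> \<turnstile>\<^sub>D\<^sub>E Imp Bot A"
  by (rule ImpI, rule BotE, rule deriv_DE_hd)

lemma Neg_Imp: "\<Gamma> \<turnstile>\<^sub>D\<^sub>E Neg A \<Longrightarrow> \<Gamma> \<turnstile>\<^sub>D\<^sub>E Imp A B"
  unfolding Neg_def by (erule Imp_trans) (rule Bot_Imp)

lemma And_mono:
  "\<Gamma> \<turnstile>\<^sub>D\<^sub>E Imp A A' \<Longrightarrow> \<Gamma> \<turnstile>\<^sub>D\<^sub>E Imp B B' \<Longrightarrow> \<Gamma> \<turnstile>\<^sub>D\<^sub>E Imp (And A B) (And A' B')"
  by (rule ImpI, rule AndI)
    (rule ImpE, erule deriv_DE_Cons, rule AndE1, rule deriv_DE_hd,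
     rule ImpE, erule deriv_DE_Cons, rule AndE2, rule deriv_DE_hd)

lemma Or_mono:
  "\<Gamma> \<turnstile>\<^sub>D\<^sub>E Imp A A' \<Longrightarrow> \<Gamma> \<turnstile>\<^sub>D\<^sub>E Imp B B' \<Longrightarrow> \<Gamma> \<turnstile>\<^sub>D\<^sub>E Imp (Or A B) (Or A' B')"
  by (rule ImpI, rule OrE[of _ A B], rule deriv_DE_hd)
    (rule OrI1, rule ImpE, rule deriv_DE_Cons, erule deriv_DE_Cons, rule deriv_DE_hd,
     rule OrI2, rule ImpE, rule deriv_DE_Cons, erule deriv_DE_Cons, rule deriv_DE_hd)

lemma Imp_mono:
  "\<Gamma> \<turnstile>\<^sub>D\<^sub>E Imp A' A \<Longrightarrow> \<Gamma> \<turnstile>\<^sub>D\<^sub>E Imp B B' \<Longrightarrow> \<Gamma> \<turnstile>\<^sub>D\<^sub>E Imp (Imp A B) (Imp A' B')"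
  by (rule ImpI, rule ImpI, rule ImpE[of _ B], rule deriv_DE_Cons, erule deriv_DE_Cons)
    (rule ImpE[of _ A], rule deriv_DE_Cons, rule deriv_DE_hd,
     rule ImpE[of _ A'], rule deriv_DE_Cons, erule deriv_DE_Cons, rule deriv_DE_hd)

lemma Iff_I: "\<Gamma> \<turnstile>\<^sub>D\<^sub>E Imp A B \<Longrightarrow> \<Gamma> \<turnstile>\<^sub>D\<^sub>E Imp B A \<Longrightarrow> \<Gamma> \<turnstile>\<^sub>D\<^sub>E Iff A B"
  unfolding Iff_def by (rule AndI)

lemma Iff_D1: "\<Gamma> \<turnstile>\<^sub>D\<^sub>E Iff A B \<Longrightarrow> \<Gamma> \<turnstile>\<^sub>D\<^sub>E Imp A B"
  unfolding Iff_def by (rule AndE1)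

lemma Iff_D2: "\<Gamma> \<turnstile>\<^sub>D\<^sub>E Iff A B \<Longrightarrow> \<Gamma> \<turnstile>\<^sub>D\<^sub>E Imp B A"
  unfolding Iff_def by (rule AndE2)

lemma Iff_refl: "\<Gamma> \<turnstile>\<^sub>D\<^sub>E Iff A A"
  by (rule Iff_I; rule Imp_refl)

lemma Iff_trans: "\<Gamma> \<turnstile>\<^sub>D\<^sub>E Iff A B \<Longrightarrow> \<Gamma> \<turnstile>\<^sub>D\<^sub>E Iff B C \<Longrightarrow> \<Gamma> \<turnstile>\<^sub>D\<^sub>E Iff A C"
  by (blast intro: Iff_I Imp_trans dest: Iff_D1 Iff_D2)

lemma Iff_And: "\<Gamma> \<turnstile>\<^sub>D\<^sub>E Iff A A' \<Longrightarrow> \<Gamma> \<turnstile>\<^sub>D\<^sub>E Iff B B' \<Longrightarrow> \<Gamma> \<turnstile>\<^sub>D\<^sub>E Iff (And A B) (And A' B')"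
  by (blast intro: Iff_I And_mono dest: Iff_D1 Iff_D2)

lemma Iff_Or: "\<Gamma> \<turnstile>\<^sub>D\<^sub>E Iff A A' \<Longrightarrow> \<Gamma> \<turnstile>\<^sub>D\<^sub>E Iff B B' \<Longrightarrow> \<Gamma> \<turnstile>\<^sub>D\<^sub>E Iff (Or A B) (Or A' B')"
  by (blast intro: Iff_I Or_mono dest: Iff_D1 Iff_D2)

lemma Iff_Imp: "\<Gamma> \<turnstile>\<^sub>D\<^sub>E Iff A A' \<Longrightarrow> \<Gamma> \<turnstile>\<^sub>D\<^sub>E Iff B B' \<Longrightarrow> \<Gamma> \<turnstile>\<^sub>D\<^sub>E Iff (Imp A B) (Imp A' B')"
  by (blast intro: Iff_I Imp_mono dest: Iff_D1 Iff_D2)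

lemma Iff_Top_D: "\<Gamma> \<turnstile>\<^sub>D\<^sub>E Iff A Top \<Longrightarrow> \<Gamma> \<turnstile>\<^sub>D\<^sub>E A"
  by (drule Iff_D2, erule ImpE, rule Top_I)

lemma Iff_Bot_D: "\<Gamma> \<turnstile>\<^sub>D\<^sub>E Iff A Bot \<Longrightarrow> \<Gamma> \<turnstile>\<^sub>D\<^sub>E Neg A"
  unfolding Neg_def by (rule Iff_D1)

lemma Neg_Iff_Bot: "\<Gamma> \<turnstile>\<^sub>D\<^sub>E Neg A \<Longrightarrow> \<Gamma> \<turnstile>\<^sub>D\<^sub>E Iff A Bot"
  unfolding Neg_def by (rule Iff_I) (assumption, rule Bot_Imp)

lemma mk_and_Iff: "\<Gamma> \<turnstile>\<^sub>D\<^sub>E Iff (And G H) (mk_and G H)"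
proof -
  have "\<Gamma> \<turnstile>\<^sub>D\<^sub>E Iff (And G H) Bot" if "G = Bot \<or> H = Bot"
    by (rule Iff_I, rule ImpI) (use that in \<open>auto intro: AndE1[OF deriv_DE_hd] AndE2[OF deriv_DE_hd] Bot_Imp\<close>)
  moreover have "\<Gamma> \<turnstile>\<^sub>D\<^sub>E Iff (And Top H) H"
    by (rule Iff_I; rule ImpI) (auto intro: AndE2[OF deriv_DE_hd] AndI Top_I deriv_DE_hd)
  moreover have "\<Gamma> \<turnstile>\<^sub>D\<^sub>E Iff (And G Top) G"
    by (rule Iff_I; rule ImpI) (auto intro: AndE1[OF deriv_DE_hd] AndI Top_I deriv_DE_hd)
  ultimately show ?thesis by (auto simp: mk_and_def Iff_refl)
qed

lemma mk_or_Iff: "\<Gamma> \<turnstile>\<^sub>D\<^sub>E Iff (Or G H) (mk_or G H)"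
proof -
  have "\<Gamma> \<turnstile>\<^sub>D\<^sub>E Iff (Or Bot H) H"
    by (rule Iff_I; rule ImpI)
      (auto intro: OrE[OF deriv_DE_hd] BotE[OF deriv_DE_hd] deriv_DE_hd OrI2)
  moreover have "\<Gamma> \<turnstile>\<^sub>D\<^sub>E Iff (Or G Bot) G"
    by (rule Iff_I; rule ImpI)
      (auto intro: OrE[OF deriv_DE_hd] BotE[OF deriv_DE_hd] deriv_DE_hd OrI1)
  moreover have "\<Gamma> \<turnstile>\<^sub>D\<^sub>E Iff (Or G H) Top" if "G = Top \<or> H = Top"
    by (rule Iff_I; rule Imp_const) (use that in \<open>auto intro: Top_I OrI1 OrI2\<close>)
  ultimately show ?thesis by (auto simp: mk_or_def Iff_refl)
qed

lemma mk_imp_Iff: "\<Gamma> \<turnstile>\<^sub>D\<^sub>E Iff (Imp G H) (mk_imp G H)"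
proof -
  have "\<Gamma> \<turnstile>\<^sub>D\<^sub>E Iff (Imp G H) Top" if "G = Bot \<or> H = Top"
    by (rule Iff_I; rule Imp_const) (use that in \<open>auto intro: Top_I Bot_Imp Imp_const\<close>)
  moreover have "\<Gamma> \<turnstile>\<^sub>D\<^sub>E Iff (Imp Top H) H"
    by (rule Iff_I; rule ImpI)
      (auto intro: ImpE[OF deriv_DE_hd] Top_I Imp_const deriv_DE_hd)
  ultimately show ?thesis by (auto simp: mk_imp_def Iff_refl)
qed

section \<open>Finite conjunctions and disjunctions, case split on equality with constants\<close>

lemma conj_list_I: "(\<And>A. A \<in> set As \<Longrightarrow> \<Gamma> \<turnstile>\<^sub>D\<^sub>E A) \<Longrightarrow> \<Gamma> \<turnstile>\<^sub>D\<^sub>E conj_list As"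
  by (induction As rule: conj_list.induct) (auto intro: Top_I AndI)

lemma conj_list_E: "\<Gamma> \<turnstile>\<^sub>D\<^sub>E conj_list As \<Longrightarrow> A \<in> set As \<Longrightarrow> \<Gamma> \<turnstile>\<^sub>D\<^sub>E A"
  by (induction As rule: conj_list.induct) (auto dest: AndE1 AndE2)

lemma disj_list_I: "\<Gamma> \<turnstile>\<^sub>D\<^sub>E A \<Longrightarrow> A \<in> set As \<Longrightarrow> \<Gamma> \<turnstile>\<^sub>D\<^sub>E disj_list As"
  by (induction As rule: disj_list.induct) (auto intro: OrI1 OrI2)

lemma disj_list_E:
  "\<Gamma> \<turnstile>\<^sub>D\<^sub>E disj_list As \<Longrightarrow> (\<And>A. A \<in> set As \<Longrightarrow> (A # \<Gamma>) \<turnstile>\<^sub>D\<^sub>E B) \<Longrightarrow> \<Gamma> \<turnstile>\<^sub>D\<^sub>E B"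
proof (induction As arbitrary: \<Gamma> rule: disj_list.induct)
  case 1
  then show ?case by (simp add: BotE)
next
  case (2 A)
  then show ?case by (auto intro: ImpE[OF ImpI])
next
  case (3 A A' As)
  show ?case
  proof (rule OrE[of _ A "disj_list (A' # As)"])
    show "\<Gamma> \<turnstile>\<^sub>D\<^sub>E Or A (disj_list (A' # As))" using "3.prems"(1) by simp
    show "(A # \<Gamma>) \<turnstile>\<^sub>D\<^sub>E B" using "3.prems"(2) by simp
    show "(disj_list (A' # As) # \<Gamma>) \<turnstile>\<^sub>D\<^sub>E B"
    proof (rule "3.IH"[OF deriv_DE_hd])
      fix A'' assume "A'' \<in> set (A' # As)"
      then show "(A'' # disj_list (A' # As) # \<Gamma>) \<turnstile>\<^sub>D\<^sub>E B"
        by (intro deriv_DE_weaken[OF "3.prems"(2)[of A'']]) auto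
    qed
  qed
qed

lemma cases_Eq_consts:
  assumes "\<And>c. c \<in> set cs \<Longrightarrow> (Eq v (Cst c) # \<Gamma>) \<turnstile>\<^sub>D\<^sub>E A"
    and "(map (\<lambda>c. Neg (Eq v (Cst c))) cs @ \<Gamma>) \<turnstile>\<^sub>D\<^sub>E A"
  shows "\<Gamma> \<turnstile>\<^sub>D\<^sub>E A"
  using assms
proof (induction cs arbitrary: \<Gamma>)
  case Nil
  then show ?case by simp
next
  case (Cons c cs)
  show ?case
  proof (rule OrE[OF DE[of \<Gamma> v "Cst c"]])
    show "(Eq v (Cst c) # \<Gamma>) \<turnstile>\<^sub>D\<^sub>E A" by (rule Cons.prems(1)) simp
    show "(Neg (Eq v (Cst c)) # \<Gamma>) \<turnstile>\<^sub>D\<^sub>E A"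
    proof (rule Cons.IH)
      fix c' assume "c' \<in> set cs"
      then show "(Eq v (Cst c') # Neg (Eq v (Cst c)) # \<Gamma>) \<turnstile>\<^sub>D\<^sub>E A"
        by (intro deriv_DE_weaken[OF Cons.prems(1)[of c']]) auto
    next
      show "(map (\<lambda>c. Neg (Eq v (Cst c))) cs @ Neg (Eq v (Cst c)) # \<Gamma>) \<turnstile>\<^sub>D\<^sub>E A"
        by (rule deriv_DE_weaken[OF Cons.prems(2)]) auto
    qed
  qed
qed

section \<open>Lifting and substitution\<close>

lemma lift_trm_closed: "vars_trm t \<subseteq> {..<k} \<Longrightarrow> lift_trm k t = t"
  by (cases t) auto

lemma lift_fm_closed: "fv A \<subseteq> {..<k} \<Longrightarrow> lift_fm k A = A"
proof (induction A arbitrary: k)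
  case (Pred p ts)
  then show ?case by (auto intro!: map_idI lift_trm_closed)
next
  case (All A)
  then show ?case by (fastforce intro: All.IH)
next
  case (Ex A)
  then show ?case by (fastforce intro: Ex.IH)
qed (auto intro!: lift_trm_closed)

lemma subst_trm_Var_lift_trm: "subst_trm (Var k) k (lift_trm (Suc k) u) = u"
  by (cases u) auto

lemma subst_fm_Var_lift_fm: "subst_fm (Var k) k (lift_fm (Suc k) A) = A"
  by (induction A arbitrary: k) (auto simp: subst_trm_Var_lift_trm map_idI)

lemma subst_trm_Var_id: "vars_trm u \<subseteq> {..k} \<Longrightarrow> subst_trm (Var k) k u = u"
  by (cases u) auto

lemma subst_fm_Var_id: "fv A \<subseteq> {..k} \<Longrightarrow> subst_fm (Var k) k A = A"
proof (induction A arbitrary: k)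
  case (Pred p ts)
  then show ?case by (auto intro!: map_idI subst_trm_Var_id)
next
  case (All A)
  then show ?case by (fastforce intro: All.IH)
next
  case (Ex A)
  then show ?case by (fastforce intro: Ex.IH)
qed (auto intro!: subst_trm_Var_id)

lemma fv_subst_fm_Cst: "fv A \<subseteq> {..k} \<Longrightarrow> fv (subst_fm (Cst c) k A) \<subseteq> {..<k}"
proof (induction A arbitrary: k)
  case (Eq s t)
  then show ?case by (cases s; cases t) auto
next
  case (Pred p ts)
  have "vars_trm (subst_trm (Cst c) k u) \<subseteq> {..<k}" if "vars_trm u \<subseteq> {..k}" for u
    using that by (cases u) auto
  then show ?case using Pred.prems by fastforce
next
  case (All A)
  have "fv (subst_fm (Cst c) (Suc k) A) \<subseteq> {..<Suc k}" by (rule All.IH) (use All.prems in force)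
  then show ?case by auto
next
  case (Ex A)
  have "fv (subst_fm (Cst c) (Suc k) A) \<subseteq> {..<Suc k}" by (rule Ex.IH) (use Ex.prems in force)
  then show ?case by auto
qed auto

lemma Eq_sym: "\<Gamma> \<turnstile>\<^sub>D\<^sub>E Eq s t \<Longrightarrow> \<Gamma> \<turnstile>\<^sub>D\<^sub>E Eq t s"
proof -
  have lift: "subst_trm u 0 (lift_trm 0 s) = s" for u :: "'a trm" by (cases s) auto
  assume "\<Gamma> \<turnstile>\<^sub>D\<^sub>E Eq s t"
  from EqSubst[OF this, of "Eq (Var 0) (lift_trm 0 s)"] show ?thesis
    by (simp add: lift Refl)
qed

lemma Neg_Eq_sym: "\<Gamma> \<turnstile>\<^sub>D\<^sub>E Neg (Eq s t) \<Longrightarrow> \<Gamma> \<turnstile>\<^sub>D\<^sub>E Neg (Eq t s)"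
  unfolding Neg_def
  by (rule Imp_trans[of _ _ "Eq s t"]) (rule ImpI, rule Eq_sym, rule deriv_DE_hd)

lemma All_mono:
  assumes "map (lift_fm 0) \<Gamma> \<turnstile>\<^sub>D\<^sub>E Imp A B"
  shows "\<Gamma> \<turnstile>\<^sub>D\<^sub>E Imp (All A) (All B)"
proof (rule ImpI, rule AllI)
  have "(All (lift_fm 1 A) # map (lift_fm 0) \<Gamma>) \<turnstile>\<^sub>D\<^sub>E A"
    using AllE[OF deriv_DE_hd, of "lift_fm 1 A" _ "Var 0"] by (simp add: subst_fm_Var_lift_fm)
  then show "map (lift_fm 0) (All A # \<Gamma>) \<turnstile>\<^sub>D\<^sub>E B"
    by (simp add: ImpE[OF deriv_DE_Cons[OF assms]])
qed

lemma Ex_mono: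
  assumes "map (lift_fm 0) \<Gamma> \<turnstile>\<^sub>D\<^sub>E Imp A B"
  shows "\<Gamma> \<turnstile>\<^sub>D\<^sub>E Imp (Ex A) (Ex B)"
proof (rule ImpI, rule ExE[OF deriv_DE_hd])
  have "(A # map (lift_fm 0) (Ex A # \<Gamma>)) \<turnstile>\<^sub>D\<^sub>E Imp A B"
    by (rule deriv_DE_weaken[OF assms]) auto
  then have "(A # map (lift_fm 0) (Ex A # \<Gamma>)) \<turnstile>\<^sub>D\<^sub>E B"
    by (rule ImpE) (rule deriv_DE_hd)
  then show "(A # map (lift_fm 0) (Ex A # \<Gamma>)) \<turnstile>\<^sub>D\<^sub>E lift_fm 0 (Ex B)"
    using ExI[of _ "Var 0" "lift_fm 1 B"] by (simp add: subst_fm_Var_lift_fm)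
qed

fun quantify :: "bool list \<Rightarrow> ('c, 'p) fm \<Rightarrow> ('c, 'p) fm" where
  "quantify [] M = M"
| "quantify (q # qs) M = (if q then All (quantify qs M) else Ex (quantify qs M))"

lemma quantify_strip: "quantify (fst (strip F)) (snd (strip F)) = F"
  by (induction F rule: strip.induct) (auto simp: split_beta)

lemma subst_fm_quantify:
  "subst_fm (Cst c) k (quantify qs M) = quantify qs (subst_fm (Cst c) (k + length qs) M)"
  by (induction qs arbitrary: k) auto

lemma preds_fm_quantify: "preds_fm (quantify qs M) = preds_fm M"
  by (induction qs) auto

lemma consts_fm_quantify: "consts_fm (quantify qs M) = consts_fm M"
  by (induction qs) auto

lemma fv_quantify: "fv (quantify qs M) \<subseteq> {..k} \<Longrightarrow> fv M \<subseteq> {..k + length qs}"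
proof (induction qs arbitrary: k)
  case (Cons q qs)
  have "fv (quantify qs M) \<subseteq> {..Suc k}"
  proof
    fix i assume i: "i \<in> fv (quantify qs M)"
    show "i \<in> {..Suc k}"
    proof (cases i)
      case (Suc j)
      then have "j \<in> fv (quantify (q # qs) M)" using i by (cases q) force+
      then show ?thesis using Cons.prems Suc by auto
    qed simp
  qed
  then show ?case using Cons.IH[of "Suc k"] by simp
qed simp

section \<open>Instances of the SPP axioms\<close>

lemma fv_conj_list: "fv (conj_list As) \<subseteq> \<Union>(fv ` set As)"
  by (induction As rule: conj_list.induct) (auto simp: Top_def)

lemma fv_disj_list: "fv (disj_list As) \<subseteq> \<Union>(fv ` set As)"
  by (induction As rule: disj_list.induct) auto

lemma fv_All_pow: "fv B \<subseteq> {..<k + n} \<Longrightarrow> fv (((\<lambda>A. All A) ^^ n) B) \<subseteq> {..<k}"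
proof (induction n arbitrary: k)
  case (Suc n)
  have "fv (((\<lambda>A. All A) ^^ n) B) \<subseteq> {..<Suc k}" using Suc by simp
  then show ?case by auto
qed simp

lemma fv_in_c: "fv (in_c cs m :: ('c, 'p) fm) \<subseteq> {..<m}"
proof -
  have disj: "fv (disj_list (map (\<lambda>c. Eq (Var (m - 1 - j)) (Cst c)) cs) :: ('c, 'p) fm) \<subseteq> {..<m}"
    if "j < m" for j
    by (rule order_trans[OF fv_disj_list]) (use that in auto)
  show ?thesis
    unfolding in_c_def by (rule order_trans[OF fv_conj_list]) (use disj in force)
qed

lemma fv_SPP: "fv (SPP cs ps :: ('c, 'p) fm) = {}"
proof -
  have spp: "fv (spp_axiom cs pm) = {}" for pm :: "'p \<times> nat"
  proof (cases pm)
    case (Pair p m)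
    have "fv (Imp (Pred p (map (\<lambda>j. Var (m - 1 - j)) [0..<m])) (in_c cs m)) \<subseteq> {..<0 + m}"
      using fv_in_c[of cs m] by auto
    then have "fv (((\<lambda>A. All A) ^^ m) (Imp (Pred p (map (\<lambda>j. Var (m - 1 - j)) [0..<m])) (in_c cs m)))
        \<subseteq> {..<0}"
      by (rule fv_All_pow)
    then show ?thesis by (simp add: spp_axiom_def Pair)
  qed
  have "fv (SPP cs ps) \<subseteq> \<Union>(fv ` set (map (spp_axiom cs) ps))"
    unfolding SPP_def by (rule fv_conj_list)
  moreover have "\<Union>(fv ` set (map (spp_axiom cs) ps)) = {}"
    using spp by simp
  ultimately show ?thesis by blast
qed

text \<open>Only meaningful on quantifier-free formulas: quantified subformulas are left unchanged.\<close>

fun ssubst_trm :: "(nat \<Rightarrow> 'c trm) \<Rightarrow> 'c trm \<Rightarrow> 'c trm" where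
  "ssubst_trm \<sigma> (Var i) = \<sigma> i"
| "ssubst_trm \<sigma> (Cst c) = Cst c"

fun ssubst_fm :: "(nat \<Rightarrow> 'c trm) \<Rightarrow> ('c, 'p) fm \<Rightarrow> ('c, 'p) fm" where
  "ssubst_fm \<sigma> Bot = Bot"
| "ssubst_fm \<sigma> (Eq u v) = Eq (ssubst_trm \<sigma> u) (ssubst_trm \<sigma> v)"
| "ssubst_fm \<sigma> (Pred p ts) = Pred p (map (ssubst_trm \<sigma>) ts)"
| "ssubst_fm \<sigma> (And A B) = And (ssubst_fm \<sigma> A) (ssubst_fm \<sigma> B)"
| "ssubst_fm \<sigma> (Or A B) = Or (ssubst_fm \<sigma> A) (ssubst_fm \<sigma> B)"
| "ssubst_fm \<sigma> (Imp A B) = Imp (ssubst_fm \<sigma> A) (ssubst_fm \<sigma> B)"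
| "ssubst_fm \<sigma> (All A) = All A"
| "ssubst_fm \<sigma> (Ex A) = Ex A"

lemma ssubst_fm_Var: "ssubst_fm Var B = B"
proof -
  have "ssubst_trm Var u = u" for u :: "'c trm" by (cases u) auto
  then show ?thesis by (induction B) (auto simp: map_idI)
qed

lemma ssubst_fm_ssubst_fm: "ssubst_fm \<sigma> (ssubst_fm \<tau> B) = ssubst_fm (ssubst_trm \<sigma> \<circ> \<tau>) B"
proof -
  have "ssubst_trm \<sigma> (ssubst_trm \<tau> u) = ssubst_trm (ssubst_trm \<sigma> \<circ> \<tau>) u" for u
    by (cases u) auto
  then show ?thesis by (induction B) auto
qed

lemma ssubst_fm_conj_list: "ssubst_fm \<sigma> (conj_list As) = conj_list (map (ssubst_fm \<sigma>) As)"
  by (induction As rule: conj_list.induct) (auto simp: Top_def)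

lemma ssubst_fm_disj_list: "ssubst_fm \<sigma> (disj_list As) = disj_list (map (ssubst_fm \<sigma>) As)"
  by (induction As rule: disj_list.induct) auto

lemma qfree_conj_list: "(\<And>A. A \<in> set As \<Longrightarrow> qfree A) \<Longrightarrow> qfree (conj_list As)"
  by (induction As rule: conj_list.induct) (auto simp: Top_def)

lemma qfree_disj_list: "(\<And>A. A \<in> set As \<Longrightarrow> qfree A) \<Longrightarrow> qfree (disj_list As)"
  by (induction As rule: disj_list.induct) auto

lemma qfree_subst_fm: "qfree B \<Longrightarrow> qfree (subst_fm t k B)"
  by (induction B) auto

lemma subst_fm_eq_ssubst_fm:
  "qfree B \<Longrightarrow>
   subst_fm t k B = ssubst_fm (\<lambda>i. if i < k then Var i else if i = k then t else Var (i - 1)) B"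
proof -
  have "subst_trm t k u = ssubst_trm (\<lambda>i. if i < k then Var i else if i = k then t else Var (i - 1)) u"
    for u by (cases u) auto
  then show "qfree B \<Longrightarrow> ?thesis" by (induction B) auto
qed

lemma funpow_lift_trm_Var: "(lift_trm 0 ^^ n) (Var i) = Var (i + n)"
  by (induction n) auto

lemma funpow_lift_trm_Cst: "(lift_trm 0 ^^ n) (Cst c) = Cst c"
  by (induction n) auto

lemma subst_fm_All_pow:
  "subst_fm t k (((\<lambda>A. All A) ^^ n) B)
   = ((\<lambda>A. All A) ^^ n) (subst_fm ((lift_trm 0 ^^ n) t) (k + n) B)"
  by (induction n arbitrary: t k) (simp_all add: funpow_swap1[of "lift_trm 0"])

text \<open>The substitution performed by instantiating the prefix of length n = length ts with
  the terms ts, outermost quantifier first: in the body, the j-th quantifier binds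
  index n - 1 - j, and the free variables move down by n.\<close>

definition list_subst :: "'c trm list \<Rightarrow> nat \<Rightarrow> 'c trm" where
  "list_subst ts i = (if i < length ts then ts ! (length ts - 1 - i) else Var (i - length ts))"

lemma list_subst_Nil: "list_subst [] = Var"
  by (auto simp: list_subst_def)

lemma list_subst_Cons:
  "ssubst_trm (list_subst ts) \<circ>
     (\<lambda>i. if i < length ts then Var i else if i = length ts then (lift_trm 0 ^^ length ts) t
          else Var (i - 1))
   = list_subst (t # ts)"
  by (cases t)
    (auto simp: fun_eq_iff list_subst_def nth_Cons' Suc_diff_Suc funpow_lift_trm_Var
      funpow_lift_trm_Cst)

lemma AllE_pow:
  "qfree B \<Longrightarrow> \<Gamma> \<turnstile>\<^sub>D\<^sub>E ((\<lambda>A. All A) ^^ length ts) B \<Longrightarrow> \<Gamma> \<turnstile>\<^sub>D\<^sub>E ssubst_fm (list_subst ts) B"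
proof (induction ts arbitrary: B)
  case Nil
  then show ?case by (simp add: list_subst_Nil ssubst_fm_Var)
next
  case (Cons t ts)
  have "\<Gamma> \<turnstile>\<^sub>D\<^sub>E inst (((\<lambda>A. All A) ^^ length ts) B) t"
    using Cons.prems(2) by (simp add: AllE)
  then have "\<Gamma> \<turnstile>\<^sub>D\<^sub>E ((\<lambda>A. All A) ^^ length ts) (subst_fm ((lift_trm 0 ^^ length ts) t) (length ts) B)"
    by (simp add: subst_fm_All_pow)
  then have "\<Gamma> \<turnstile>\<^sub>D\<^sub>E ssubst_fm (list_subst ts) (subst_fm ((lift_trm 0 ^^ length ts) t) (length ts) B)"
    by (rule Cons.IH[rotated]) (rule qfree_subst_fm[OF Cons.prems(1)])
  then show ?case
    by (simp add: subst_fm_eq_ssubst_fm[OF Cons.prems(1)] ssubst_fm_ssubst_fm list_subst_Cons)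
qed

lemma SPP_instance:
  fixes ts :: "'c trm list" and ps :: "('p \<times> nat) list"
  assumes "\<Gamma> \<turnstile>\<^sub>D\<^sub>E SPP cs ps" and "(p, length ts) \<in> set ps"
  shows "\<Gamma> \<turnstile>\<^sub>D\<^sub>E Imp (Pred p ts) (conj_list (map (\<lambda>t. disj_list (map (\<lambda>c. Eq t (Cst c)) cs)) ts))"
proof -
  define m where "m = length ts"
  define B :: "('c, 'p) fm" where "B = Imp (Pred p (map (\<lambda>j. Var (m - 1 - j)) [0..<m])) (in_c cs m)"
  have "\<Gamma> \<turnstile>\<^sub>D\<^sub>E spp_axiom cs (p, m)"
    using assms unfolding SPP_def m_def by (auto intro: conj_list_E)
  then have "\<Gamma> \<turnstile>\<^sub>D\<^sub>E ((\<lambda>A. All A) ^^ length ts) B"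
    by (simp add: spp_axiom_def B_def m_def)
  moreover have "qfree B"
    unfolding B_def in_c_def by (auto intro!: qfree_conj_list qfree_disj_list)
  ultimately have "\<Gamma> \<turnstile>\<^sub>D\<^sub>E ssubst_fm (list_subst ts) B"
    by (intro AllE_pow)
  moreover have "ssubst_fm (list_subst ts) B
      = Imp (Pred p ts) (conj_list (map (\<lambda>t. disj_list (map (\<lambda>c. Eq t (Cst c)) cs)) ts))"
  proof -
    have nth: "list_subst ts (length ts - Suc j) = ts ! j" if "j < length ts" for j
      using that by (auto simp: list_subst_def)
    have "map (ssubst_trm (list_subst ts)) (map (\<lambda>j. Var (m - 1 - j)) [0..<m]) = ts"
      by (rule nth_equalityI) (auto simp: nth m_def)
    moreover have "map (ssubst_fm (list_subst ts))
        (map (\<lambda>j. disj_list (map (\<lambda>c. Eq (Var (m - 1 - j)) (Cst c)) cs)) [0..<m])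
      = (map (\<lambda>t. disj_list (map (\<lambda>c. Eq t (Cst c)) cs)) ts :: ('c, 'p) fm list)"
      by (rule nth_equalityI) (auto simp: nth m_def ssubst_fm_disj_list comp_def)
    ultimately show ?thesis
      unfolding B_def in_c_def by (simp add: ssubst_fm_conj_list)
  qed
  ultimately show ?thesis by simp
qed

section \<open>Safe variables that differ from all constants\<close>

definition outside_consts :: "'c list \<Rightarrow> ('p \<times> nat) list \<Rightarrow> ('c, 'p) fm list \<Rightarrow> nat \<Rightarrow> bool" where
  "outside_consts cs ps \<Delta> k \<longleftrightarrow>
     SPP cs ps \<in> set \<Delta> \<and> (\<forall>c\<in>set cs. Neg (Eq (Var k) (Cst c)) \<in> set \<Delta>)"

lemma outside_consts_lift_fm:
  assumes "outside_consts cs ps \<Delta> k"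
  shows "outside_consts cs ps (map (lift_fm 0) \<Delta>) (Suc k)"
proof -
  have "lift_fm 0 (SPP cs ps) = SPP cs ps"
    by (rule lift_fm_closed) (simp add: fv_SPP)
  then have "SPP cs ps \<in> lift_fm 0 ` set \<Delta>"
    using assms by (force simp: outside_consts_def)
  moreover have "Neg (Eq (Var (Suc k)) (Cst c)) \<in> lift_fm 0 ` set \<Delta>" if "c \<in> set cs" for c
    using assms that rev_image_eqI[of "Neg (Eq (Var k) (Cst c))" "set \<Delta>" _ "lift_fm 0"]
    by (auto simp: outside_consts_def Neg_def)
  ultimately show ?thesis by (simp add: outside_consts_def)
qed

lemma outside_consts_Neg_Eq:
  assumes "outside_consts cs ps \<Delta> k" and "k \<in> RV_atom_trm s t"
    and "consts_trm s \<union> consts_trm t \<subseteq> set cs"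
  shows "\<Delta> \<turnstile>\<^sub>D\<^sub>E Neg (Eq s t)"
proof -
  have "\<Delta> \<turnstile>\<^sub>D\<^sub>E Neg (Eq (Var k) (Cst c))" if "c \<in> set cs" for c
    using assms(1) that by (auto simp: outside_consts_def intro: Assm)
  then show ?thesis
    using assms(2,3) by (cases s; cases t) (auto intro: Neg_Eq_sym)
qed

lemma outside_consts_Neg_Pred:
  fixes \<Delta> :: "('c, 'p) fm list"
  assumes \<Delta>: "outside_consts cs ps \<Delta> k"
    and "(p, length ts) \<in> set ps" and "Var k \<in> set ts"
  shows "\<Delta> \<turnstile>\<^sub>D\<^sub>E Neg (Pred p ts)"
proof -
  let ?\<Gamma> = "Pred p ts # \<Delta>"
  have "?\<Gamma> \<turnstile>\<^sub>D\<^sub>E SPP cs ps"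
    using \<Delta> by (auto simp: outside_consts_def intro: Assm)
  then have "?\<Gamma> \<turnstile>\<^sub>D\<^sub>E Imp (Pred p ts) (conj_list (map (\<lambda>t. disj_list (map (\<lambda>c. Eq t (Cst c)) cs)) ts))"
    using assms(2) by (rule SPP_instance)
  then have "?\<Gamma> \<turnstile>\<^sub>D\<^sub>E conj_list (map (\<lambda>t. disj_list (map (\<lambda>c. Eq t (Cst c)) cs)) ts)"
    by (rule ImpE) (rule deriv_DE_hd)
  then have "?\<Gamma> \<turnstile>\<^sub>D\<^sub>E disj_list (map (\<lambda>c. Eq (Var k) (Cst c)) cs)"
    by (rule conj_list_E) (use assms(3) in auto)
  then have "?\<Gamma> \<turnstile>\<^sub>D\<^sub>E Bot"
  proof (rule disj_list_E)
    fix A :: "('c, 'p) fm" assume "A \<in> set (map (\<lambda>c. Eq (Var k) (Cst c)) cs)"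
    then have "(A # ?\<Gamma>) \<turnstile>\<^sub>D\<^sub>E Neg A"
      using \<Delta> by (auto simp: outside_consts_def intro: Assm)
    then show "(A # ?\<Gamma>) \<turnstile>\<^sub>D\<^sub>E Bot"
      unfolding Neg_def by (rule ImpE) (rule deriv_DE_hd)
  qed
  then show ?thesis
    unfolding Neg_def by (rule ImpI)
qed

lemma simplify_erase_Iff:
  assumes \<Delta>: "outside_consts cs ps \<Delta> k"
  shows "qfree G \<Longrightarrow> consts_fm G \<subseteq> set cs \<Longrightarrow> preds_fm G \<subseteq> set ps \<Longrightarrow>
    \<Delta> \<turnstile>\<^sub>D\<^sub>E Iff G (simplify (erase k G))"
proof (induction G)
  case (Eq s t)
  then show ?case
    using outside_consts_Neg_Eq[OF \<Delta>, of s t] by (auto intro: Neg_Iff_Bot Iff_refl)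
next
  case (Pred p ts)
  have "\<Delta> \<turnstile>\<^sub>D\<^sub>E Neg (Pred p ts)" if "k \<in> (\<Union>t\<in>set ts. vars_trm t)"
  proof -
    from that obtain t where t: "t \<in> set ts" "k \<in> vars_trm t" by auto
    have "t = Var k" using t(2) by (cases t) auto
    with t(1) have "Var k \<in> set ts" by simp
    then show ?thesis
      using Pred.prems by (intro outside_consts_Neg_Pred[OF \<Delta>]) auto
  qed
  then show ?case by (auto intro: Neg_Iff_Bot Iff_refl)
next
  case (And G H)
  then show ?case by (auto intro: Iff_trans[OF Iff_And mk_and_Iff])
next
  case (Or G H)
  then show ?case by (auto intro: Iff_trans[OF Iff_Or mk_or_Iff])
next
  case (Imp G H)
  then show ?case by (auto intro: Iff_trans[OF Iff_Imp mk_imp_Iff])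
qed (auto intro: Iff_refl)

lemma safe_cond_Imp:
  assumes "outside_consts cs ps \<Delta> k" and "qfree G"
    and "consts_fm G \<subseteq> set cs" and "preds_fm G \<subseteq> set ps"
    and "safe_cond q k pol G"
  shows "\<Delta> \<turnstile>\<^sub>D\<^sub>E (if q = pol then Imp X G else Imp G X)"
proof -
  have "\<Delta> \<turnstile>\<^sub>D\<^sub>E G" if "pos_weakly_restricted k G"
    using that simplify_erase_Iff[OF assms(1-4)] by (simp add: pos_weakly_restricted_def Iff_Top_D)
  moreover have "\<Delta> \<turnstile>\<^sub>D\<^sub>E Neg G" if "neg_weakly_restricted k G"
    using that simplify_erase_Iff[OF assms(1-4)] by (simp add: neg_weakly_restricted_def Iff_Bot_D)
  ultimately show ?thesis
    using assms(5) unfolding safe_cond_def by (cases q; cases pol) (auto intro: Imp_const Neg_Imp)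
qed

lemma subst_trm_Cst_id: "vars_trm u \<subseteq> {..k} \<Longrightarrow> k \<notin> vars_trm u \<Longrightarrow> subst_trm (Cst c) k u = u"
  by (cases u) auto

lemma safe_var_subst_Imp:
  fixes M :: "('c, 'p) fm"
  assumes \<Delta>: "outside_consts cs ps \<Delta> k"
  shows "qfree M \<Longrightarrow> fv M \<subseteq> {..k} \<Longrightarrow> consts_fm M \<subseteq> set cs \<Longrightarrow> preds_fm M \<subseteq> set ps \<Longrightarrow>
    safe_var q k pol M \<Longrightarrow>
    \<Delta> \<turnstile>\<^sub>D\<^sub>E (if q = pol then Imp (subst_fm (Cst c) k M) M else Imp M (subst_fm (Cst c) k M))"
proof (induction M arbitrary: pol)
  case (Eq s t)
  show ?case
  proof (cases "safe_cond q k pol (Eq s t :: ('c, 'p) fm)")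
    case False
    with Eq.prems have "subst_fm (Cst c) k (Eq s t :: ('c, 'p) fm) = Eq s t"
      by (auto intro!: subst_trm_Cst_id)
    then show ?thesis by (simp add: Imp_refl)
  qed (rule safe_cond_Imp[OF \<Delta>], insert Eq.prems, auto)
next
  case (Pred p ts)
  show ?case
  proof (cases "safe_cond q k pol (Pred p ts :: ('c, 'p) fm)")
    case False
    with Pred.prems have "subst_fm (Cst c) k (Pred p ts :: ('c, 'p) fm) = Pred p ts"
      by (auto intro!: map_idI subst_trm_Cst_id)
    then show ?thesis by (simp add: Imp_refl)
  qed (rule safe_cond_Imp[OF \<Delta>], insert Pred.prems, auto)
next
  case (And G H)
  show ?case
  proof (cases "safe_cond q k pol (And G H)")
    case False
    with And.prems have "safe_var q k pol G" "safe_var q k pol H" by auto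
    with And.IH[of pol] And.prems show ?thesis by (cases "q = pol") (auto intro: And_mono)
  qed (rule safe_cond_Imp[OF \<Delta>], insert And.prems, auto)
next
  case (Or G H)
  show ?case
  proof (cases "safe_cond q k pol (Or G H)")
    case False
    with Or.prems have "safe_var q k pol G" "safe_var q k pol H" by auto
    with Or.IH[of pol] Or.prems show ?thesis by (cases "q = pol") (auto intro: Or_mono)
  qed (rule safe_cond_Imp[OF \<Delta>], insert Or.prems, auto)
next
  case (Imp G H)
  show ?case
  proof (cases "safe_cond q k pol (Imp G H)")
    case False
    with Imp.prems have "safe_var q k (\<not> pol) G" "safe_var q k pol H" by auto
    with Imp.IH(1)[of "\<not> pol"] Imp.IH(2)[of pol] Imp.prems show ?thesis
      by (cases "q = pol") (simp_all add: Imp_mono)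
  qed (rule safe_cond_Imp[OF \<Delta>], insert Imp.prems, auto)
qed (auto simp: Imp_refl)

lemma quantify_mono:
  assumes "\<And>\<Delta>'. outside_consts cs ps \<Delta>' (k + length qs) \<Longrightarrow> \<Delta>' \<turnstile>\<^sub>D\<^sub>E Imp A B"
    and "outside_consts cs ps \<Delta> k"
  shows "\<Delta> \<turnstile>\<^sub>D\<^sub>E Imp (quantify qs A) (quantify qs B)"
  using assms
proof (induction qs arbitrary: \<Delta> k)
  case (Cons q qs)
  have "map (lift_fm 0) \<Delta> \<turnstile>\<^sub>D\<^sub>E Imp (quantify qs A) (quantify qs B)"
    by (rule Cons.IH[of "Suc k"]) (use Cons.prems outside_consts_lift_fm in auto)
  then show ?case by (cases q) (auto intro: All_mono Ex_mono)
qed simp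

lemma safe_prenex_inst_Imp:
  assumes "prenex F" and "fv F \<subseteq> {0}"
    and "consts_fm F \<subseteq> set cs" and "preds_fm F \<subseteq> set ps"
    and "safe_var q (length (fst (strip F))) True (snd (strip F))"
    and "outside_consts cs ps \<Delta> 0"
  shows "\<Delta> \<turnstile>\<^sub>D\<^sub>E (if q then Imp (inst F (Cst c)) F else Imp F (inst F (Cst c)))"
proof -
  define qs M where "qs = fst (strip F)" and "M = snd (strip F)"
  have F: "F = quantify qs M"
    by (simp add: qs_def M_def quantify_strip)
  have inst: "inst F (Cst c) = quantify qs (subst_fm (Cst c) (length qs) M)"
    unfolding F by (simp add: subst_fm_quantify)
  have "qfree M"
    using assms(1) by (simp add: prenex_def M_def)
  moreover have "fv M \<subseteq> {..length qs}"
    using assms(2) fv_quantify[of qs M 0] unfolding F by auto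
  moreover have "consts_fm M \<subseteq> set cs" "preds_fm M \<subseteq> set ps"
    using assms(3,4) unfolding F by (simp_all add: consts_fm_quantify preds_fm_quantify)
  moreover have "safe_var q (length qs) True M"
    using assms(5) by (simp add: qs_def M_def)
  ultimately have "\<Delta>' \<turnstile>\<^sub>D\<^sub>E (if q then Imp (subst_fm (Cst c) (length qs) M) M
                          else Imp M (subst_fm (Cst c) (length qs) M))"
    if "outside_consts cs ps \<Delta>' (0 + length qs)" for \<Delta>'
    using safe_var_subst_Imp[where \<Delta> = \<Delta>' and k = "length qs" and pol = True] that by simp
  then have "\<Delta> \<turnstile>\<^sub>D\<^sub>E (if q then Imp (quantify qs (subst_fm (Cst c) (length qs) M)) (quantify qs M)
                        else Imp (quantify qs M) (quantify qs (subst_fm (Cst c) (length qs) M)))"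
    by (cases q) (auto intro: quantify_mono[OF _ assms(6)])
  then show ?thesis
    unfolding inst unfolding F .
qed

section \<open>Reducing a safe quantifier to its instances\<close>

lemma fv_inst_Cst: "fv F \<subseteq> {0} \<Longrightarrow> fv (inst F (Cst c)) = {}"
  using fv_subst_fm_Cst[of F 0 c] by auto

lemma all_iff_conj_consts:
  fixes F :: "('c, 'p) fm"
  assumes F: "fv F \<subseteq> {0}" and "c\<^sub>0 \<in> set cs"
    and step: "\<And>\<Delta>. outside_consts cs ps \<Delta> 0 \<Longrightarrow> \<Delta> \<turnstile>\<^sub>D\<^sub>E Imp (inst F (Cst c\<^sub>0)) F"
  shows "[SPP cs ps] \<turnstile>\<^sub>D\<^sub>E Iff (All F) (conj_list (map (\<lambda>c. inst F (Cst c)) cs))"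
proof -
  let ?C = "conj_list (map (\<lambda>c. inst F (Cst c)) cs)"
  have "fv ?C = {}"
    using fv_conj_list[of "map (\<lambda>c. inst F (Cst c)) cs"] fv_inst_Cst[OF F] by auto
  then have closed: "map (lift_fm 0) [?C, SPP cs ps] = [?C, SPP cs ps]"
    by (simp add: lift_fm_closed fv_SPP)
  have "[?C, SPP cs ps] \<turnstile>\<^sub>D\<^sub>E F"
  proof (rule cases_Eq_consts[where v = "Var 0" and cs = cs])
    fix c assume c: "c \<in> set cs"
    have "(Eq (Var 0) (Cst c) # [?C, SPP cs ps]) \<turnstile>\<^sub>D\<^sub>E inst F (Cst c)"
      by (rule conj_list_E[of _ "map (\<lambda>c. inst F (Cst c)) cs"]) (use c in \<open>auto intro: Assm\<close>)
    then have "(Eq (Var 0) (Cst c) # [?C, SPP cs ps]) \<turnstile>\<^sub>D\<^sub>E inst F (Var 0)"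
      by (rule EqSubst[OF Eq_sym[OF deriv_DE_hd]])
    then show "(Eq (Var 0) (Cst c) # [?C, SPP cs ps]) \<turnstile>\<^sub>D\<^sub>E F"
      using F by (simp add: subst_fm_Var_id)
  next
    let ?\<Delta> = "map (\<lambda>c. Neg (Eq (Var 0) (Cst c))) cs @ [?C, SPP cs ps]"
    have "?\<Delta> \<turnstile>\<^sub>D\<^sub>E inst F (Cst c\<^sub>0)"
      by (rule conj_list_E[of _ "map (\<lambda>c. inst F (Cst c)) cs"]) (auto intro: Assm assms(2))
    moreover have "outside_consts cs ps ?\<Delta> 0"
      by (auto simp: outside_consts_def)
    ultimately show "?\<Delta> \<turnstile>\<^sub>D\<^sub>E F"
      by (rule ImpE[OF step, rotated])
  qed
  then have "[SPP cs ps] \<turnstile>\<^sub>D\<^sub>E Imp ?C (All F)"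
    by (intro ImpI AllI) (simp only: closed)
  moreover have "[SPP cs ps] \<turnstile>\<^sub>D\<^sub>E Imp (All F) ?C"
    by (rule ImpI, rule conj_list_I) (auto intro: AllE deriv_DE_hd)
  ultimately show ?thesis by (rule Iff_I[rotated])
qed

lemma ex_iff_disj_consts:
  fixes F :: "('c, 'p) fm"
  assumes F: "fv F \<subseteq> {0}" and "c\<^sub>0 \<in> set cs"
    and step: "\<And>\<Delta>. outside_consts cs ps \<Delta> 0 \<Longrightarrow> \<Delta> \<turnstile>\<^sub>D\<^sub>E Imp F (inst F (Cst c\<^sub>0))"
  shows "[SPP cs ps] \<turnstile>\<^sub>D\<^sub>E Iff (Ex F) (disj_list (map (\<lambda>c. inst F (Cst c)) cs))"
proof -
  let ?D = "disj_list (map (\<lambda>c. inst F (Cst c)) cs)"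
  have "fv ?D = {}"
    using fv_disj_list[of "map (\<lambda>c. inst F (Cst c)) cs"] fv_inst_Cst[OF F] by auto
  moreover have "lift_fm 0 (Ex F) = Ex F"
    by (rule lift_fm_closed) (use F in auto)
  ultimately have closed: "lift_fm 0 ?D = ?D" "map (lift_fm 0) [Ex F, SPP cs ps] = [Ex F, SPP cs ps]"
    by (simp_all add: lift_fm_closed fv_SPP)
  have "[F, Ex F, SPP cs ps] \<turnstile>\<^sub>D\<^sub>E ?D"
  proof (rule cases_Eq_consts[where v = "Var 0" and cs = cs])
    fix c assume c: "c \<in> set cs"
    have "(Eq (Var 0) (Cst c) # [F, Ex F, SPP cs ps]) \<turnstile>\<^sub>D\<^sub>E inst F (Var 0)"
      using F by (simp add: subst_fm_Var_id Assm)
    then have "(Eq (Var 0) (Cst c) # [F, Ex F, SPP cs ps]) \<turnstile>\<^sub>D\<^sub>E inst F (Cst c)"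
      by (rule EqSubst[OF deriv_DE_hd])
    then show "(Eq (Var 0) (Cst c) # [F, Ex F, SPP cs ps]) \<turnstile>\<^sub>D\<^sub>E ?D"
      by (rule disj_list_I) (use c in auto)
  next
    let ?\<Delta> = "map (\<lambda>c. Neg (Eq (Var 0) (Cst c))) cs @ [F, Ex F, SPP cs ps]"
    have "outside_consts cs ps ?\<Delta> 0"
      by (auto simp: outside_consts_def)
    then have "?\<Delta> \<turnstile>\<^sub>D\<^sub>E inst F (Cst c\<^sub>0)"
      by (rule ImpE[OF step]) (auto intro: Assm)
    then show "?\<Delta> \<turnstile>\<^sub>D\<^sub>E ?D"
      by (rule disj_list_I) (use assms(2) in auto)
  qed
  then have "[SPP cs ps] \<turnstile>\<^sub>D\<^sub>E Imp (Ex F) ?D"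
    by (intro ImpI ExE[OF deriv_DE_hd]) (simp only: closed)
  moreover have "[SPP cs ps] \<turnstile>\<^sub>D\<^sub>E Imp ?D (Ex F)"
  proof (rule ImpI, rule disj_list_E[OF deriv_DE_hd])
    fix A assume "A \<in> set (map (\<lambda>c. inst F (Cst c)) cs)"
    then obtain c where "A = inst F (Cst c)" by auto
    then show "(A # ?D # [SPP cs ps]) \<turnstile>\<^sub>D\<^sub>E Ex F"
      using ExI[where A = F and t = "Cst c", OF deriv_DE_hd] by simp
  qed
  ultimately show ?thesis by (rule Iff_I)
qed

lemma safe_var_outermost:
  "safe S \<Longrightarrow> strip S = (q # qs, M) \<Longrightarrow> safe_var q (length qs) True M"
  by (auto simp: safe_def)

theorem lemma8:
  fixes F :: "('c, 'p) fm" and cs :: "'c list" and ps :: "('p \<times> nat) list"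
  assumes "prenex F"
    and "fv F \<subseteq> {0}"
    and "cs \<noteq> []" and "distinct cs"
    and "consts_fm F \<subseteq> set cs"
    and "distinct ps" and "set ps = preds_fm F"
  shows "(safe (All F) \<longrightarrow>
            [SPP cs ps] \<turnstile>\<^sub>D\<^sub>E Iff (All F) (conj_list (map (\<lambda>c. inst F (Cst c)) cs)))
       \<and> (safe (Ex F) \<longrightarrow>
            [SPP cs ps] \<turnstile>\<^sub>D\<^sub>E Iff (Ex F) (disj_list (map (\<lambda>c. inst F (Cst c)) cs)))"
proof (intro conjI impI)
  have c: "hd cs \<in> set cs" using \<open>cs \<noteq> []\<close> by simp
  have inst_Imp: "\<Delta> \<turnstile>\<^sub>D\<^sub>E (if q then Imp (inst F (Cst (hd cs))) F else Imp F (inst F (Cst (hd cs))))"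
    if "safe S" "strip S = (q # fst (strip F), snd (strip F))" "outside_consts cs ps \<Delta> 0" for S q \<Delta>
    using safe_prenex_inst_Imp[OF assms(1,2,5) _ safe_var_outermost[OF that(1,2)] that(3)] assms(7)
    by simp
  show "[SPP cs ps] \<turnstile>\<^sub>D\<^sub>E Iff (All F) (conj_list (map (\<lambda>c. inst F (Cst c)) cs))" if "safe (All F)"
    using inst_Imp[OF that, of True] by (intro all_iff_conj_consts[OF assms(2) c]) (simp add: split_beta)
  show "[SPP cs ps] \<turnstile>\<^sub>D\<^sub>E Iff (Ex F) (disj_list (map (\<lambda>c. inst F (Cst c)) cs))" if "safe (Ex F)"
    using inst_Imp[OF that, of False] by (intro ex_iff_disj_consts[OF assms(2) c]) (simp add: split_beta)
qed

end
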